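(* Consider an $(N,z)$-ensemble of one-dimensional random spring networks on the circle (defined in the context), with $N\ge 3$. For every $\bar\ell\in(-1/2,1/2)$, $$\mathbb E(\Delta l\mid \bar l=\bar\ell)=-\frac{2\bar\ell}{z}\Big(1-\frac1N\Big).$$ Moreover, for each fixed graph in the ensemble (i.e. conditioning on the matrix $\mathbf S$), $\mathbb E[\Delta l\mid \bar l=\bar\ell,\mathbf S]=\frac{2\bar\ell}{Nz}\operatorname{tr}\mathbf S$.
   Context: Let the circle be $\mathbb R/\mathbb Z$ (circumference 1). Fix an integer $N\ge3$ and a number $z$ with $2\le z\le N-1$ and $M:=Nz/2$ an integer. An $(N,z)$-network is generated as follows: (i) node positions $x_1,\dots,x_N$ are i.i.d. uniform on $\mathbb R/\mathbb Z$; (ii) for $k=1,\dots,N$ node $k$ is joined to node $k+1$ by a spring (indices mod $N$, so node $N$ is joined to node $1$); (iii) further springs are added between randomly chosen node pairs (by a random procedure independent of the positions), each unordered pair being joined by at most one spring, until there are $M$ springs. The ensemble of all such networks is the $(N,z)$-ensemble. A spring joining nodes $a<b$ is oriented from $a$ to $b$, and its initial signed length $\bar l_e\in[-1/2,1/2)$ is the representative of $x_b-x_a$ modulo $1$ in $[-1/2,1/2)$ (the signed length of the shorter arc, positive if counterclockwise); each $\bar l_e$ is uniform on $[-1/2,1/2)$. Let $G$ be the resulting directed graph, $\mathbf C\in\mathbb Z^{m\times M}$, $m=M-N+1$, a signed cycle matrix of $G$ (choose a spanning tree; each non-tree edge closes a fundamental cycle, oriented arbitrarily; $C_{ji}=\pm1$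 if edge $i$ is on cycle $j$ with agreeing/opposite orientation, $0$ otherwise). The vector of winding numbers is $\mathbf g=\mathbf C\bar{\boldsymbol l}\in\mathbb Z^m$. The relaxed lengths are the minimizer of $\tfrac12\boldsymbol l^T\boldsymbol l$ subject to $\mathbf C\boldsymbol l=\mathbf g$, namely $\boldsymbol l^*=\mathbf P\bar{\boldsymbol l}$ with $\mathbf P=\mathbf C^T(\mathbf C\mathbf C^T)^{-1}\mathbf C$; set $\mathbf S=\mathbf P-\mathbf I$ and $\Delta\boldsymbol l=\boldsymbol l^*-\bar{\boldsymbol l}=\mathbf S\bar{\boldsymbol l}$. Edge-averaged quantities: let $I$ be uniform on the $M$ springs, independent of everything else; write $\Delta l:=\Delta l_I$, $\bar l:=\bar l_I$. Thus $\mathbb E(\Delta l\mid\bar l=\bar\ell)=\frac1M\sum_{i=1}^M\mathbb E[\Delta l_i\mid \bar l_i=\bar\ell]$, and analogously when additionally conditioning on $\mathbf S$. *)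

theory Defs
  imports "HOL-Probability.Probability" "Jordan_Normal_Form.Gauss_Jordan_Elimination"
begin

text \<open>Nodes are 0,...,N-1 (paper: 1,...,N). A network is a list of springs; spring e is the
  pair (a,b) with a < b, oriented from a to b. The list order is the spring indexing.\<close>

definition cyc_edge :: "nat \<Rightarrow> nat \<Rightarrow> nat \<times> nat" where
  "cyc_edge N k = (min k (Suc k mod N), max k (Suc k mod N))"

definition valid_graph :: "nat \<Rightarrow> nat \<Rightarrow> (nat \<times> nat) list \<Rightarrow> bool" where
  "valid_graph N M E \<longleftrightarrow> distinct E \<and> length E = M \<and>
     (\<forall>(a,b)\<in>set E. a < b \<and> b < N) \<and> (\<forall>k<N. cyc_edge N k \<in> set E)"

definition incidence :: "(nat \<times> nat) list \<Rightarrow> nat \<Rightarrow> nat \<Rightarrow> int" where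
  "incidence E v e = (if v = snd (E!e) then 1 else if v = fst (E!e) then -1 else 0)"

definition connected_by :: "nat \<Rightarrow> (nat \<times> nat) list \<Rightarrow> nat set \<Rightarrow> bool" where
  "connected_by N E T \<longleftrightarrow>
     (\<forall>u<N. \<forall>v<N. (\<lambda>a b. \<exists>e\<in>T. E!e = (a,b) \<or> E!e = (b,a))\<^sup>*\<^sup>* u v)"

definition spanning_tree :: "nat \<Rightarrow> (nat \<times> nat) list \<Rightarrow> nat set \<Rightarrow> bool" where
  "spanning_tree N E T \<longleftrightarrow> T \<subseteq> {..<length E} \<and> card T = N - 1 \<and> connected_by N E T"

text \<open>Signed cycle matrix: choose a spanning tree T; row j is the fundamental cycle closed by
  the non-tree edge f j, with entries +1/-1 according to agreement with an (arbitrary)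
  traversal orientation. Agreement of orientations along a closed traversal is expressed by
  flow conservation at every node.\<close>
definition signed_cycle_matrix :: "nat \<Rightarrow> (nat \<times> nat) list \<Rightarrow> int mat \<Rightarrow> bool" where
  "signed_cycle_matrix N E C \<longleftrightarrow>
    (let M = length E; m = M - N + 1 in
     C \<in> carrier_mat m M \<and>
     (\<exists>T f. spanning_tree N E T \<and> bij_betw f {..<m} ({..<M} - T) \<and>
        (\<forall>j<m. (C $$ (j, f j) = 1 \<or> C $$ (j, f j) = -1) \<and>
               (\<forall>e<M. e \<notin> T \<and> e \<noteq> f j \<longrightarrow> C $$ (j, e) = 0) \<and>
               (\<forall>e<M. C $$ (j, e) \<in> {-1, 0, 1}) \<and>
               (\<forall>v<N. (\<Sum>e<M. incidence E v e * C $$ (j, e)) = 0))))"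

definition proj_mat :: "int mat \<Rightarrow> real mat" where
  "proj_mat C = (let Cr = map_mat real_of_int C in
     transpose_mat Cr * the (mat_inverse (Cr * transpose_mat Cr)) * Cr)"

definition S_mat :: "int mat \<Rightarrow> real mat" where
  "S_mat C = proj_mat C - 1\<^sub>m (dim_col C)"

definition mat_trace :: "real mat \<Rightarrow> real" where
  "mat_trace A = (\<Sum>i<dim_row A. A $$ (i, i))"

definition signed_len :: "real \<Rightarrow> real" where
  "signed_len t = t - of_int \<lfloor>t + 1/2\<rfloor>"

definition lbar :: "(nat \<times> nat) list \<Rightarrow> (nat \<Rightarrow> real) \<Rightarrow> nat \<Rightarrow> real" where
  "lbar E x e = signed_len (x (snd (E!e)) - x (fst (E!e)))"

definition dl :: "(nat \<times> nat) list \<Rightarrow> int mat \<Rightarrow> (nat \<Rightarrow> real) \<Rightarrow> nat \<Rightarrow> real" where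
  "dl E C x i = (\<Sum>j<length E. S_mat C $$ (i, j) * lbar E x j)"

text \<open>Positions: i.i.d. uniform on the circle R/Z, represented in [0,1).\<close>
definition positions :: "nat \<Rightarrow> (nat \<Rightarrow> real) measure" where
  "positions N = PiM {..<N} (\<lambda>_. uniform_measure lborel {0..<1})"

text \<open>Outcome ((E, i), x): graph E drawn from Q (independent of positions), uniformly random
  spring index i, positions x.\<close>
definition ens :: "nat \<Rightarrow> nat \<Rightarrow> (nat \<times> nat) list pmf
    \<Rightarrow> (((nat \<times> nat) list \<times> nat) \<times> (nat \<Rightarrow> real)) measure" where
  "ens N M Q = measure_pmf (pair_pmf Q (pmf_of_set {..<M})) \<Otimes>\<^sub>M positions N"

definition Lbar :: "((nat \<times> nat) list \<times> nat) \<times> (nat \<Rightarrow> real) \<Rightarrow> real" where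
  "Lbar \<omega> = lbar (fst (fst \<omega>)) (snd \<omega>) (snd (fst \<omega>))"

definition DL :: "((nat \<times> nat) list \<Rightarrow> int mat)
    \<Rightarrow> ((nat \<times> nat) list \<times> nat) \<times> (nat \<Rightarrow> real) \<Rightarrow> real" where
  "DL Cof \<omega> = dl (fst (fst \<omega>)) (Cof (fst (fst \<omega>))) (snd \<omega>) (snd (fst \<omega>))"

definition cond_exp_given :: "'a measure \<Rightarrow> ('a \<Rightarrow> real) \<Rightarrow> ('a \<Rightarrow> real) \<Rightarrow> 'a \<Rightarrow> real" where
  "cond_exp_given M X Y = real_cond_exp M (vimage_algebra (space M) Y borel) X"

end

theory Submission
  imports Defs "Jordan_Normal_Form.Determinant"
begin

text \<open>Since \<open>\<Delta>l = S lbar\<close>, it suffices to show \<open>E[1\<^sub>B(lbar\<^sub>i) \<Delta>l\<^sub>i] = S\<^sub>i\<^sub>i E[1\<^sub>B(lbar) lbar]\<close>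
  for every spring \<open>i\<close> and Borel set \<open>B\<close>. This holds because the signed lengths of two distinct
  springs are uncorrelated even after restricting one of them to \<open>B\<close>: the other spring has an
  endpoint not on the first, and integrating out the uniform position of that endpoint leaves a
  centred signed length. Averaging over the springs gives \<open>E(\<Delta>l | lbar) = (tr S / M) lbar\<close>.
  Finally \<open>P\<close> is the orthogonal projection onto the row space of the cycle matrix, which has
  full rank \<open>m = M - N + 1\<close> because every non-tree edge lies on exactly one fundamental cycle;
  hence \<open>tr S = m - M = 1 - N\<close>, and \<open>M = N z / 2\<close> gives the formula.\<close>

section \<open>Trace of the cycle-space projection\<close>

lemma trace_mult_comm:
  fixes A B :: "'a::comm_ring_1 mat"
  assumes A: "A \<in> carrier_mat n k" and B: "B \<in> carrier_mat k n"
  shows "(\<Sum>i<n. (A * B) $$ (i, i)) = (\<Sum>j<k. (B * A) $$ (j, j))"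
proof -
  have "(\<Sum>i<n. (A * B) $$ (i, i)) = (\<Sum>i<n. \<Sum>j<k. A $$ (i, j) * B $$ (j, i))"
    using A B by (intro sum.cong refl) (auto simp: scalar_prod_def lessThan_atLeast0)
  also have "\<dots> = (\<Sum>j<k. \<Sum>i<n. B $$ (j, i) * A $$ (i, j))"
    by (subst sum.swap) (simp add: mult.commute)
  also have "\<dots> = (\<Sum>j<k. (B * A) $$ (j, j))"
    using A B by (intro sum.cong refl) (auto simp: scalar_prod_def lessThan_atLeast0)
  finally show ?thesis .
qed

lemma self_scalar_prod_eq_0_iff:
  fixes w :: "real vec"
  shows "w \<bullet> w = 0 \<longleftrightarrow> w = 0\<^sub>v (dim_vec w)"
proof
  assume "w \<bullet> w = 0"
  hence "(\<Sum>i\<in>{0..<dim_vec w}. w $ i * w $ i) = 0" by (simp add: scalar_prod_def)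
  hence "\<forall>i\<in>{0..<dim_vec w}. w $ i * w $ i = 0" by (subst (asm) sum_nonneg_eq_0_iff) auto
  thus "w = 0\<^sub>v (dim_vec w)" by (intro eq_vecI) auto
qed (metis carrier_vec_dim_vec scalar_prod_left_zero)

lemma det_gram_nonzero:
  fixes C :: "real mat"
  assumes C: "C \<in> carrier_mat m M"
    and f: "\<And>j. j < m \<Longrightarrow> f j < M"
    and diag: "\<And>j. j < m \<Longrightarrow> C $$ (j, f j) \<noteq> 0"
    and off_diag: "\<And>j k. j < m \<Longrightarrow> k < m \<Longrightarrow> k \<noteq> j \<Longrightarrow> C $$ (k, f j) = 0"
  shows "det (C * transpose_mat C) \<noteq> 0"
proof
  assume "det (C * transpose_mat C) = 0"
  then obtain v where v: "v \<in> carrier_vec m" "v \<noteq> 0\<^sub>v m" "(C * transpose_mat C) *\<^sub>v v = 0\<^sub>v m"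
    using det_0_iff_vec_prod_zero[of "C * transpose_mat C" m] C by auto
  define w where "w = transpose_mat C *\<^sub>v v"
  have w: "w \<in> carrier_vec M" using C v(1) by (simp add: w_def)
  have "w \<bullet> w = v \<bullet> (C *\<^sub>v w)"
    unfolding w_def by (rule transpose_vec_mult_scalar[OF C _ v(1)]) (use C v(1) in auto)
  also have "C *\<^sub>v w = (C * transpose_mat C) *\<^sub>v v"
    unfolding w_def using C v(1) by (simp add: assoc_mult_mat_vec)
  finally have "w = 0\<^sub>v M"
    using v w by (simp add: self_scalar_prod_eq_0_iff)
  have "v = 0\<^sub>v m"
  proof (rule eq_vecI)
    fix j assume "j < dim_vec (0\<^sub>v m)"
    hence j: "j < m" by simp
    have "w $ f j = (\<Sum>k\<in>{0..<m}. C $$ (k, f j) * v $ k)"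
      using C v(1) f[OF j] by (simp add: w_def scalar_prod_def)
    also have "\<dots> = (\<Sum>k\<in>{j}. C $$ (k, f j) * v $ k)"
      using j off_diag[OF j] by (intro sum.mono_neutral_right) auto
    finally show "v $ j = 0\<^sub>v m $ j"
      using \<open>w = 0\<^sub>v M\<close> diag[OF j] f[OF j] j by simp
  qed (use v in auto)
  with v(2) show False ..
qed

lemma mat_trace_proj_mat:
  assumes C: "C \<in> carrier_mat m M"
    and gram: "det (map_mat real_of_int C * transpose_mat (map_mat real_of_int C)) \<noteq> 0"
  shows "mat_trace (proj_mat C) = real m"
proof -
  define Cr where "Cr = map_mat real_of_int C"
  define G where "G = Cr * transpose_mat Cr"
  have Cr: "Cr \<in> carrier_mat m M" using C by (simp add: Cr_def)
  have G: "G \<in> carrier_mat m m" using Cr by (simp add: G_def)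
  obtain Gi where Gi: "mat_inverse G = Some Gi"
    using mat_inverse(1)[OF G, where b = "()"] det_non_zero_imp_unit[OF G gram[folded Cr_def G_def], where b = "()"]
    by (cases "mat_inverse G") auto
  from mat_inverse(2)[OF G Gi] have GGi: "G * Gi = 1\<^sub>m m" and Gi_carrier: "Gi \<in> carrier_mat m m"
    by auto
  have P: "proj_mat C = transpose_mat Cr * Gi * Cr"
    unfolding proj_mat_def Let_def Cr_def[symmetric] G_def[symmetric] Gi by simp
  have CtGi: "transpose_mat Cr * Gi \<in> carrier_mat M m" using Cr Gi_carrier by auto
  have "mat_trace (proj_mat C) = (\<Sum>i<M. (transpose_mat Cr * Gi * Cr) $$ (i, i))"
    unfolding mat_trace_def P using CtGi Cr by simp
  also have "\<dots> = (\<Sum>j<m. (Cr * (transpose_mat Cr * Gi)) $$ (j, j))"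
    by (rule trace_mult_comm[OF CtGi Cr])
  also have "Cr * (transpose_mat Cr * Gi) = G * Gi"
    unfolding G_def using Cr Gi_carrier by (simp add: assoc_mult_mat[of _ m M _ m _ m])
  finally show ?thesis unfolding GGi by simp
qed

lemma signed_cycle_matrix_carrier:
  "signed_cycle_matrix N E C \<Longrightarrow> C \<in> carrier_mat (length E - N + 1) (length E)"
  unfolding signed_cycle_matrix_def Let_def by blast

text \<open>The non-tree edge closing the j-th fundamental cycle lies on no other fundamental cycle,
  so the columns of these edges form a signed identity matrix.\<close>

lemma signed_cycle_matrix_det_gram:
  assumes "signed_cycle_matrix N E C"
  shows "det (map_mat real_of_int C * transpose_mat (map_mat real_of_int C)) \<noteq> 0"
proof -
  define M where "M = length E"
  define m where "m = M - N + 1"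
  from assms obtain T f where C: "C \<in> carrier_mat m M" and f: "bij_betw f {..<m} ({..<M} - T)"
    and diag: "\<And>j. j < m \<Longrightarrow> C $$ (j, f j) = 1 \<or> C $$ (j, f j) = -1"
    and off_tree: "\<And>j e. j < m \<Longrightarrow> e < M \<Longrightarrow> e \<notin> T \<Longrightarrow> e \<noteq> f j \<Longrightarrow> C $$ (j, e) = 0"
    unfolding signed_cycle_matrix_def Let_def M_def[symmetric] m_def[symmetric] by blast
  have f_into: "f j < M" "f j \<notin> T" if "j < m" for j
    using f that unfolding bij_betw_def by auto
  have f_inj: "f j \<noteq> f k" if "j < m" "k < m" "k \<noteq> j" for j k
    using f that unfolding bij_betw_def inj_on_def by auto
  show ?thesis
  proof (rule det_gram_nonzero[where f = f])
    show "map_mat real_of_int C \<in> carrier_mat m M" using C by simp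
  next
    fix j assume "j < m"
    thus "f j < M" "map_mat real_of_int C $$ (j, f j) \<noteq> 0"
      using diag f_into C by force+
  next
    fix j k assume "j < m" "k < m" "k \<noteq> j"
    thus "map_mat real_of_int C $$ (k, f j) = 0"
      using off_tree f_into f_inj C by simp
  qed
qed

lemma mat_trace_S_mat:
  assumes "signed_cycle_matrix N E C"
  shows "mat_trace (S_mat C) = real (length E - N + 1) - real (length E)"
proof -
  note C = signed_cycle_matrix_carrier[OF assms]
  have "mat_trace (S_mat C) = (\<Sum>i<length E. proj_mat C $$ (i, i) - 1)"
    using C unfolding mat_trace_def S_mat_def by (simp add: proj_mat_def Let_def)
  also have "\<dots> = mat_trace (proj_mat C) - real (length E)"
    using C by (simp add: sum_subtractf mat_trace_def proj_mat_def Let_def)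
  finally show ?thesis
    using mat_trace_proj_mat[OF C signed_cycle_matrix_det_gram[OF assms]] by simp
qed

lemma mat_trace_S_mat_eq_sum:
  "signed_cycle_matrix N E C \<Longrightarrow> mat_trace (S_mat C) = (\<Sum>i<length E. S_mat C $$ (i, i))"
  using signed_cycle_matrix_carrier[of N E C]
  by (simp add: mat_trace_def S_mat_def proj_mat_def Let_def)

section \<open>Signed length of a uniform point on the circle\<close>

lemma signed_len_add_of_int [simp]: "signed_len (t + of_int n) = signed_len t"
proof -
  have "\<lfloor>t + of_int n + 1/2\<rfloor> = \<lfloor>t + 1/2\<rfloor> + n"
    using floor_add_int[of "t + 1/2" n] by (simp add: algebra_simps)
  thus ?thesis unfolding signed_len_def by simp
qed

lemma signed_len_bounds: "-1/2 \<le> signed_len t" "signed_len t < 1/2"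
  unfolding signed_len_def
  using of_int_floor_le[of "t + 1/2"] real_of_int_floor_add_one_gt[of "t + 1/2"] by linarith+

lemma abs_signed_len_le: "\<bar>signed_len t\<bar> \<le> 1/2"
  using signed_len_bounds[of t] by linarith

lemma borel_measurable_signed_len [measurable]: "signed_len \<in> borel_measurable borel"
  unfolding signed_len_def[abs_def] by measurable

lemma signed_len_uminus:
  assumes "t + 1/2 \<notin> \<int>"
  shows "signed_len (- t) = - signed_len t"
proof -
  define n where "n = \<lfloor>t + 1/2\<rfloor>"
  have "of_int n \<noteq> t + 1/2" using assms by (metis Ints_of_int)
  hence "of_int n < t + 1/2" "t + 1/2 < of_int n + 1"
    unfolding n_def using of_int_floor_le[of "t + 1/2"] real_of_int_floor_add_one_gt[of "t + 1/2"]
    by linarith+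
  hence "\<lfloor>- t + 1/2\<rfloor> = - n" by (simp add: floor_eq_iff)
  thus ?thesis unfolding signed_len_def n_def by simp
qed

definition uniform01 :: "real measure" where
  "uniform01 = uniform_measure lborel {0..<1}"

lemma uniform01_eq_density: "uniform01 = density lborel (\<lambda>x. ennreal (indicator {0..<1} x))"
  unfolding uniform01_def uniform_measure_def
  by (intro arg_cong[where f = "density lborel"]) (auto simp: fun_eq_iff indicator_def)

lemma prob_space_uniform01: "prob_space uniform01"
  unfolding uniform01_def by (rule prob_space_uniform_measure) auto

lemma sets_uniform01 [simp, measurable_cong]: "sets uniform01 = sets borel"
  by (simp add: uniform01_eq_density)

lemma space_uniform01 [simp]: "space uniform01 = UNIV"
  by (simp add: uniform01_eq_density)

lemma integral_uniform01:
  fixes f :: "real \<Rightarrow> real"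
  assumes "f \<in> borel_measurable borel"
  shows "(\<integral>x. f x \<partial>uniform01) = (\<integral>x. indicator {0..<1} x * f x \<partial>lborel)"
  unfolding uniform01_eq_density using assms by (simp add: integral_density)

lemma integrable_indicator_atLeastLessThan_bounded:
  fixes h :: "real \<Rightarrow> real"
  assumes "h \<in> borel_measurable borel" and "\<And>x. \<bar>h x\<bar> \<le> K"
  shows "integrable lborel (\<lambda>x. indicator {a..<b} x * h x)"
proof (cases "a \<le> b")
  case True
  show ?thesis
    by (rule integrableI_bounded_set[where A = "{a..<b}" and B = K])
       (use assms True in \<open>auto simp: indicator_def\<close>)
qed simp

text \<open>Cut the unit interval at the fractional part d of c and swap the two pieces.\<close>

lemma integral_unit_interval_periodic_shift:
  fixes H :: "real \<Rightarrow> real"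
  assumes H_meas [measurable]: "H \<in> borel_measurable borel" and H_bounded: "\<And>t. \<bar>H t\<bar> \<le> K"
    and H_periodic: "\<And>t n. H (t + of_int n) = H t"
  shows "(\<integral>x. indicator {0..<1} x * H (x - c) \<partial>lborel) = (\<integral>x. indicator {0..<1} x * H x \<partial>lborel)"
proof -
  define d where "d = c - of_int \<lfloor>c\<rfloor>"
  have d: "0 \<le> d" "d < 1"
    unfolding d_def using of_int_floor_le[of c] real_of_int_floor_add_one_gt[of c] by linarith+
  have H_c: "H (x - c) = H (x - d)" for x
    using H_periodic[of "x - d" "- \<lfloor>c\<rfloor>"] by (simp add: d_def algebra_simps)
  have H_1: "H (x + (1 - d)) = H (x - d)" for x
    using H_periodic[of "x - d" 1] by (simp add: algebra_simps)
  have int: "integrable lborel (\<lambda>x. indicator {a..<b} x * H (x + s))" for a b s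
    by (rule integrable_indicator_atLeastLessThan_bounded) (use H_bounded in auto)
  have "(\<integral>x. indicator {0..<1} x * H (x - c) \<partial>lborel)
      = (\<integral>x. indicator {0..<d} x * H (x + (1 - d)) + indicator {d..<1} x * H (x + - d) \<partial>lborel)"
    by (rule Bochner_Integration.integral_cong)
       (use d in \<open>auto simp: indicator_def H_c H_1\<close>)
  also have "\<dots> = (\<integral>x. indicator {0..<d} x * H (x + (1 - d)) \<partial>lborel)
      + (\<integral>x. indicator {d..<1} x * H (x + - d) \<partial>lborel)"
    by (rule Bochner_Integration.integral_add[OF int int])
  also have "(\<integral>x. indicator {0..<d} x * H (x + (1 - d)) \<partial>lborel) = (\<integral>x. indicator {1-d..<1} x * H x \<partial>lborel)"
    using lborel_integral_real_affine[of 1 "\<lambda>x. indicator {0..<d} x * H (x + (1 - d))" "d - 1"]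
    by (simp add: indicator_def algebra_simps)
  also have "(\<integral>x. indicator {d..<1} x * H (x + - d) \<partial>lborel) = (\<integral>x. indicator {0..<1-d} x * H x \<partial>lborel)"
    using lborel_integral_real_affine[of 1 "\<lambda>x. indicator {d..<1} x * H (x + - d)" d]
    by (simp add: indicator_def algebra_simps)
  also have "(\<integral>x. indicator {1-d..<1} x * H x \<partial>lborel) + (\<integral>x. indicator {0..<1-d} x * H x \<partial>lborel)
      = (\<integral>x. indicator {1-d..<1} x * H x + indicator {0..<1-d} x * H x \<partial>lborel)"
    using int[of _ _ 0] by (intro Bochner_Integration.integral_add[symmetric]) simp_all
  also have "\<dots> = (\<integral>x. indicator {0..<1} x * H x \<partial>lborel)"
    by (rule Bochner_Integration.integral_cong) (use d in \<open>auto simp: indicator_def\<close>)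
  finally show ?thesis .
qed

lemma integral_uniform01_periodic_shift:
  fixes H :: "real \<Rightarrow> real"
  assumes [measurable]: "H \<in> borel_measurable borel" and "\<And>t. \<bar>H t\<bar> \<le> K"
    and "\<And>t n. H (t + of_int n) = H t"
  shows "(\<integral>y. H (y - c) \<partial>uniform01) = (\<integral>y. H y \<partial>uniform01)"
  using integral_unit_interval_periodic_shift[OF assms] by (simp add: integral_uniform01)

lemma integral_signed_len_uniform01: "(\<integral>y. signed_len y \<partial>uniform01) = 0"
proof -
  have "(\<integral>y. signed_len y \<partial>uniform01) = (\<integral>y. signed_len (y - 1/2) \<partial>uniform01)"
    by (rule integral_uniform01_periodic_shift[symmetric, where K = 1])
       (auto intro: order_trans[OF abs_signed_len_le])
  also have "\<dots> = (\<integral>x. indicator {0..1} x *\<^sub>R (x - 1/2) \<partial>lborel)"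
  proof (subst integral_uniform01, measurable, rule integral_cong_AE)
    show "AE x in lborel. indicator {0..<1} x * signed_len (x - 1/2) = indicator {0..1} x *\<^sub>R (x - 1/2)"
      using AE_lborel_singleton[of 1]
    proof eventually_elim
      case (elim x)
      show ?case
      proof (cases "x \<in> {0..<1}")
        case True
        hence "\<lfloor>x - 1/2 + 1/2\<rfloor> = 0" by (simp add: floor_eq_iff)
        thus ?thesis using True by (simp add: signed_len_def)
      qed (use elim in \<open>auto simp: indicator_def\<close>)
    qed
  qed measurable
  also have "\<dots> = (\<lambda>x::real. x\<^sup>2/2 - x/2) 1 - (\<lambda>x::real. x\<^sup>2/2 - x/2) 0"
    by (rule integral_FTC_atLeastAtMost)
       (auto intro!: derivative_eq_intros continuous_intros
         simp: has_real_derivative_iff_has_vector_derivative[symmetric] power2_eq_square)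
  finally show ?thesis by simp
qed

lemma integral_signed_len_uminus_uniform01: "(\<integral>y. signed_len (- y) \<partial>uniform01) = 0"
proof -
  have "(\<integral>y. signed_len (- y) \<partial>uniform01) = (\<integral>x. - (indicator {0..<1} x * signed_len x) \<partial>lborel)"
  proof (subst integral_uniform01, measurable, rule integral_cong_AE)
    show "AE x in lborel. indicator {0..<1} x * signed_len (- x) = - (indicator {0..<1} x * signed_len x)"
      using AE_lborel_singleton[of "1/2"]
    proof eventually_elim
      case (elim x)
      show ?case
      proof (cases "x \<in> {0..<1}")
        case True
        have "x + 1/2 \<notin> \<int>"
        proof
          assume "x + 1/2 \<in> \<int>"
          then obtain k where k: "x + 1/2 = of_int k" by (auto elim: Ints_cases)
          with True have "(0::real) < of_int k" "of_int k < (2::real)" by auto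
          hence "k = 1" by simp
          with k elim show False by simp
        qed
        thus ?thesis by (simp add: signed_len_uminus)
      qed simp
    qed
  qed measurable
  also have "\<dots> = - (\<integral>y. signed_len y \<partial>uniform01)"
    by (simp add: integral_uniform01)
  finally show ?thesis by (simp add: integral_signed_len_uniform01)
qed

lemma integral_signed_len_diff_uniform01:
  "(\<integral>y. signed_len (y - c) \<partial>uniform01) = 0" "(\<integral>y. signed_len (c - y) \<partial>uniform01) = 0"
proof -
  have bounded: "\<bar>signed_len t\<bar> \<le> 1" for t
    using abs_signed_len_le[of t] by simp
  show "(\<integral>y. signed_len (y - c) \<partial>uniform01) = 0"
    using integral_uniform01_periodic_shift[of signed_len 1 c] bounded
    by (simp add: integral_signed_len_uniform01)
  have "signed_len (- (t + of_int n)) = signed_len (- t)" for t n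
    using signed_len_add_of_int[of "- t" "- n"] by simp
  thus "(\<integral>y. signed_len (c - y) \<partial>uniform01) = 0"
    using integral_uniform01_periodic_shift[of "\<lambda>t. signed_len (- t)" 1 c] bounded
    by (simp add: integral_signed_len_uminus_uniform01)
qed

section \<open>Springs between independent uniform nodes\<close>

lemma positions_eq: "positions N = PiM {..<N} (\<lambda>_. uniform01)"
  unfolding positions_def uniform01_def ..

lemma prob_space_PiM_uniform01: "prob_space (PiM I (\<lambda>_. uniform01))"
  by (rule prob_space_PiM) (rule prob_space_uniform01)

lemma prob_space_positions: "prob_space (positions N)"
  unfolding positions_eq by (rule prob_space_PiM_uniform01)

lemma measurable_component_uniform01 [measurable]:
  "(\<lambda>x. x j) \<in> borel_measurable (PiM I (\<lambda>_. uniform01))"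
proof (cases "j \<in> I")
  case True
  show ?thesis
    by (subst measurable_cong_sets[OF refl sets_uniform01[symmetric]])
       (rule measurable_component_singleton[OF True])
next
  case False
  have "x j = undefined" if "x \<in> space (PiM I (\<lambda>_. uniform01))" for x
    using that False by (intro PiE_arb[of x I]) (simp add: space_PiM)
  thus ?thesis by (subst measurable_cong[where g = "\<lambda>_. undefined"]) simp_all
qed

lemma integral_positions_coordinate:
  fixes F :: "(nat \<Rightarrow> real) \<Rightarrow> real"
  assumes w: "w < N" and F [measurable]: "F \<in> borel_measurable (positions N)"
    and F_bounded: "\<And>x. \<bar>F x\<bar> \<le> K"
  shows "(\<integral>x. F x \<partial>positions N) =
      (\<integral>x. (\<integral>y. F (x(w := y)) \<partial>uniform01) \<partial>PiM ({..<N} - {w}) (\<lambda>_. uniform01))"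
proof -
  have N: "insert w ({..<N} - {w}) = {..<N}" using w by auto
  interpret P: prob_space "positions N" by (rule prob_space_positions)
  interpret product_sigma_finite "\<lambda>_::nat. uniform01"
    unfolding product_sigma_finite_def
    using prob_space_imp_sigma_finite[OF prob_space_uniform01] by simp
  have "integrable (positions N) F"
    by (rule P.integrable_const_bound[where B = K]) (use F_bounded in auto)
  from product_integral_insert[of "{..<N} - {w}" w F] this show ?thesis
    unfolding N positions_eq by simp
qed

definition partial_mean_signed_len :: "real set \<Rightarrow> real" where
  "partial_mean_signed_len B = (\<integral>y. indicator B (signed_len y) * signed_len y \<partial>uniform01)"

lemma integral_positions_signed_len_same:
  assumes ab: "a < b" "b < N" and [measurable]: "B \<in> sets borel"
  shows "(\<integral>x. indicator B (signed_len (x b - x a)) * signed_len (x b - x a) \<partial>positions N)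
    = partial_mean_signed_len B"
proof -
  let ?H = "\<lambda>t. indicator B (signed_len t) * signed_len t"
  have H_bounded: "\<bar>?H t\<bar> \<le> 1" for t
    using abs_signed_len_le[of t] by (simp add: indicator_def)
  have "(\<integral>x. ?H (x b - x a) \<partial>positions N)
      = (\<integral>x. (\<integral>y. ?H (y - x a) \<partial>uniform01) \<partial>PiM ({..<N} - {b}) (\<lambda>_. uniform01))"
    using ab H_bounded
    by (subst integral_positions_coordinate[where w = b and K = 1]) (simp_all add: positions_eq)
  also have "\<dots> = (\<integral>x. partial_mean_signed_len B \<partial>PiM ({..<N} - {b}) (\<lambda>_. uniform01))"
    unfolding partial_mean_signed_len_def
    using H_bounded
    by (intro Bochner_Integration.integral_cong refl integral_uniform01_periodic_shift) simp_all
  finally show ?thesis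
    using prob_space.prob_space[OF prob_space_PiM_uniform01[of "{..<N} - {b}"]] by simp
qed

text \<open>Two distinct springs have an endpoint not shared with the other; integrating over its
  position first kills the product, as the signed length is centred under every shift.\<close>

lemma integral_positions_signed_len_other:
  assumes ab: "a < b" "b < N" and cd: "c < d" "d < N" and ne: "(a, b) \<noteq> (c, d)"
    and [measurable]: "B \<in> sets borel"
  shows "(\<integral>x. indicator B (signed_len (x b - x a)) * signed_len (x d - x c) \<partial>positions N) = 0"
proof -
  let ?F = "\<lambda>x. indicator B (signed_len (x b - x a)) * signed_len (x d - x c)"
  have F_bounded: "\<bar>?F x\<bar> \<le> 1" for x
    using abs_signed_len_le[of "x d - x c"] by (simp add: indicator_def)
  have F_meas: "?F \<in> borel_measurable (positions N)"
    unfolding positions_eq by measurable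
  obtain w where w: "w \<in> {c, d}" "w \<notin> {a, b}"
  proof (cases "d \<in> {a, b}")
    case True
    hence "c \<notin> {a, b}" using ab cd ne by auto
    thus ?thesis using that by blast
  qed (use that in blast)
  have "(\<integral>x. ?F x \<partial>positions N)
      = (\<integral>x. (\<integral>y. ?F (x(w := y)) \<partial>uniform01) \<partial>PiM ({..<N} - {w}) (\<lambda>_. uniform01))"
    using w cd by (intro integral_positions_coordinate[OF _ F_meas F_bounded]) auto
  also have "\<dots> = 0"
  proof -
    have "(\<integral>y. ?F (x(w := y)) \<partial>uniform01) = 0" for x
    proof -
      have "(\<integral>y. ?F (x(w := y)) \<partial>uniform01) = indicator B (signed_len (x b - x a))
          * (\<integral>y. signed_len ((x(w := y)) d - (x(w := y)) c) \<partial>uniform01)"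
        using w by auto
      also have "(\<integral>y. signed_len ((x(w := y)) d - (x(w := y)) c) \<partial>uniform01) = 0"
        using w cd by (auto simp: integral_signed_len_diff_uniform01)
      finally show ?thesis by simp
    qed
    thus ?thesis by simp
  qed
  finally show ?thesis .
qed

lemma integral_pair_pmf_uniform_index:
  fixes Q :: "'a pmf" and h :: "'a \<times> nat \<Rightarrow> real"
  assumes Q: "finite (set_pmf Q)" and M: "0 < M"
  shows "(\<integral>e. h e \<partial>pair_pmf Q (pmf_of_set {..<M}))
      = (\<Sum>E\<in>set_pmf Q. pmf Q E * (\<Sum>i<M. h (E, i)) / real M)"
proof -
  have ne: "{..<M} \<noteq> {}" using M by auto
  have "(\<integral>e. h e \<partial>pair_pmf Q (pmf_of_set {..<M}))
      = (\<Sum>e\<in>set_pmf Q \<times> {..<M}. pmf (pair_pmf Q (pmf_of_set {..<M})) e *\<^sub>R h e)"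
    by (rule integral_measure_pmf) (use Q ne in auto)
  also have "\<dots> = (\<Sum>(E, i)\<in>set_pmf Q \<times> {..<M}. pmf Q E * (1 / real M) * h (E, i))"
    by (intro sum.cong refl) (auto simp: pmf_pair pmf_of_set[OF ne finite_lessThan])
  also have "\<dots> = (\<Sum>E\<in>set_pmf Q. pmf Q E * (\<Sum>i<M. h (E, i)) / real M)"
    by (subst sum.cartesian_product[symmetric])
       (simp add: sum_distrib_left sum_divide_distrib)
  finally show ?thesis .
qed

lemma
  fixes R :: "'e::countable pmf" and P :: "'b measure" and g :: "'e \<Rightarrow> 'b \<Rightarrow> real"
  assumes P: "prob_space P"
    and g_meas: "\<And>e. g e \<in> borel_measurable P"
    and g_bounded: "\<And>e x. e \<in> set_pmf R \<Longrightarrow> \<bar>g e x\<bar> \<le> K"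
  shows integrable_pair_pmf_bounded: "integrable (measure_pmf R \<Otimes>\<^sub>M P) (\<lambda>\<omega>. g (fst \<omega>) (snd \<omega>))"
    and integral_pair_pmf_bounded:
      "(\<integral>\<omega>. g (fst \<omega>) (snd \<omega>) \<partial>(measure_pmf R \<Otimes>\<^sub>M P)) = (\<integral>e. (\<integral>x. g e x \<partial>P) \<partial>R)"
proof -
  interpret P: prob_space P by (rule P)
  interpret RP: pair_sigma_finite "measure_pmf R" P ..
  interpret RP_prob: prob_space "measure_pmf R \<Otimes>\<^sub>M P"
    by (rule prob_space_pair[OF measure_pmf.prob_space_axioms P])
  have sets_eq: "sets (measure_pmf R \<Otimes>\<^sub>M P) = sets (count_space UNIV \<Otimes>\<^sub>M P)"
    by (rule sets_pair_measure_cong) simp_all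
  have g_meas': "(\<lambda>\<omega>. g (fst \<omega>) (snd \<omega>)) \<in> borel_measurable (measure_pmf R \<Otimes>\<^sub>M P)"
    unfolding measurable_cong_sets[OF sets_eq refl]
    by (rule measurable_pair_measure_countable1) (simp_all add: g_meas)
  have "{\<omega> \<in> space (measure_pmf R \<Otimes>\<^sub>M P). fst \<omega> \<in> set_pmf R} \<in> sets (measure_pmf R \<Otimes>\<^sub>M P)"
  proof -
    have "(\<lambda>\<omega>. indicator (set_pmf R) (fst \<omega>) :: real) \<in> borel_measurable (measure_pmf R \<Otimes>\<^sub>M P)"
      unfolding measurable_cong_sets[OF sets_eq refl]
      by (rule measurable_pair_measure_countable1) simp_all
    from measurable_sets[OF this, of "{1}"] show ?thesis
      by (simp add: indicator_def Int_def conj_commute)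
  qed
  hence "AE \<omega> in measure_pmf R \<Otimes>\<^sub>M P. fst \<omega> \<in> set_pmf R"
    by (rule RP.AE_pair_measure) (auto simp: AE_measure_pmf_iff)
  hence "AE \<omega> in measure_pmf R \<Otimes>\<^sub>M P. norm (g (fst \<omega>) (snd \<omega>)) \<le> K"
    by eventually_elim (simp add: g_bounded)
  thus int: "integrable (measure_pmf R \<Otimes>\<^sub>M P) (\<lambda>\<omega>. g (fst \<omega>) (snd \<omega>))"
    by (rule RP_prob.integrable_const_bound[OF _ g_meas'])
  show "(\<integral>\<omega>. g (fst \<omega>) (snd \<omega>) \<partial>(measure_pmf R \<Otimes>\<^sub>M P)) = (\<integral>e. (\<integral>x. g e x \<partial>P) \<partial>R)"
    using RP.integral_fst[of g] int by (simp add: case_prod_unfold)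
qed

lemma
  fixes g :: "(nat \<times> nat) list \<Rightarrow> nat \<Rightarrow> (nat \<Rightarrow> real) \<Rightarrow> real"
  assumes M: "0 < M" and Q: "finite (set_pmf Q)"
    and g_meas: "\<And>E i. g E i \<in> borel_measurable (positions N)"
    and g_bounded: "\<And>E i x. E \<in> set_pmf Q \<Longrightarrow> i < M \<Longrightarrow> \<bar>g E i x\<bar> \<le> K"
  shows integrable_ens: "integrable (ens N M Q) (\<lambda>\<omega>. g (fst (fst \<omega>)) (snd (fst \<omega>)) (snd \<omega>))"
    and integral_ens: "(\<integral>\<omega>. g (fst (fst \<omega>)) (snd (fst \<omega>)) (snd \<omega>) \<partial>ens N M Q)
      = (\<Sum>E\<in>set_pmf Q. pmf Q E * (\<Sum>i<M. \<integral>x. g E i x \<partial>positions N) / real M)"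
proof -
  have bounded: "\<bar>g (fst e) (snd e) x\<bar> \<le> K" if "e \<in> set_pmf (pair_pmf Q (pmf_of_set {..<M}))" for e x
  proof -
    have "{..<M} \<noteq> {}" using M by auto
    thus ?thesis using that g_bounded by (cases e) auto
  qed
  show "integrable (ens N M Q) (\<lambda>\<omega>. g (fst (fst \<omega>)) (snd (fst \<omega>)) (snd \<omega>))"
    unfolding ens_def
    by (rule integrable_pair_pmf_bounded[OF prob_space_positions, where g = "\<lambda>e. g (fst e) (snd e)" and K = K])
       (use g_meas bounded in auto)
  show "(\<integral>\<omega>. g (fst (fst \<omega>)) (snd (fst \<omega>)) (snd \<omega>) \<partial>ens N M Q)
      = (\<Sum>E\<in>set_pmf Q. pmf Q E * (\<Sum>i<M. \<integral>x. g E i x \<partial>positions N) / real M)"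
    unfolding ens_def
    by (subst integral_pair_pmf_bounded[OF prob_space_positions, where K = K])
       (use g_meas bounded integral_pair_pmf_uniform_index[OF Q M] in auto)
qed

lemma valid_graph_edge:
  assumes "valid_graph N M E" and "i < M"
  shows "fst (E ! i) < snd (E ! i)" "snd (E ! i) < N"
proof -
  have "E ! i \<in> set E" using assms by (simp add: valid_graph_def)
  with assms(1) show "fst (E ! i) < snd (E ! i)" "snd (E ! i) < N"
    unfolding valid_graph_def by (cases "E ! i"; fastforce)+
qed

lemma valid_graph_nth_eq_iff:
  assumes "valid_graph N M E" and "i < M" and "j < M"
  shows "E ! i = E ! j \<longleftrightarrow> i = j"
  using assms unfolding valid_graph_def by (auto simp: nth_eq_iff_index_eq)

lemma finite_valid_graphs: "finite {E. valid_graph N M E}"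
proof (rule finite_subset)
  show "{E. valid_graph N M E} \<subseteq> {E. set E \<subseteq> {..<N} \<times> {..<N} \<and> length E = M}"
    unfolding valid_graph_def by fastforce
qed (rule finite_lists_length_eq, simp)

lemma abs_lbar_le: "\<bar>lbar E x i\<bar> \<le> 1"
  unfolding lbar_def using abs_signed_len_le by (rule order.trans) simp

lemma borel_measurable_lbar [measurable]: "(\<lambda>x. lbar E x i) \<in> borel_measurable (positions N)"
  unfolding lbar_def positions_eq by measurable

lemma borel_measurable_dl [measurable]: "(\<lambda>x. dl E C x i) \<in> borel_measurable (positions N)"
  unfolding dl_def by measurable

lemma abs_dl_le:
  assumes "length E = M"
  shows "\<bar>dl E C x i\<bar> \<le> (\<Sum>j<M. \<bar>S_mat C $$ (i, j)\<bar>)"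
proof -
  have "\<bar>dl E C x i\<bar> \<le> (\<Sum>j<M. \<bar>S_mat C $$ (i, j) * lbar E x j\<bar>)"
    unfolding dl_def assms by (rule sum_abs)
  also have "\<dots> \<le> (\<Sum>j<M. \<bar>S_mat C $$ (i, j)\<bar>)"
    using abs_lbar_le by (intro sum_mono) (simp add: abs_mult mult_left_le)
  finally show ?thesis .
qed

lemma integral_positions_indicator_lbar:
  assumes E: "valid_graph N M E" and i: "i < M" and j: "j < M" and [measurable]: "B \<in> sets borel"
  shows "(\<integral>x. indicator B (lbar E x i) * lbar E x j \<partial>positions N)
    = (if i = j then partial_mean_signed_len B else 0)"
proof (cases "i = j")
  case True
  thus ?thesis
    unfolding lbar_def using integral_positions_signed_len_same[OF valid_graph_edge[OF E i]] by simp
next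
  case False
  hence "(fst (E ! i), snd (E ! i)) \<noteq> (fst (E ! j), snd (E ! j))"
    using valid_graph_nth_eq_iff[OF E i j] by simp
  thus ?thesis
    unfolding lbar_def using False
      integral_positions_signed_len_other[OF valid_graph_edge[OF E i] valid_graph_edge[OF E j]]
    by simp
qed

lemma integral_positions_indicator_lbar_dl:
  assumes E: "valid_graph N M E" and i: "i < M" and [measurable]: "B \<in> sets borel"
  shows "(\<integral>x. indicator B (lbar E x i) * dl E C x i \<partial>positions N)
    = S_mat C $$ (i, i) * partial_mean_signed_len B"
proof -
  interpret prob_space "positions N" by (rule prob_space_positions)
  have len: "length E = M" using E by (simp add: valid_graph_def)
  have int: "integrable (positions N) (\<lambda>x. S_mat C $$ (i, j) * (indicator B (lbar E x i) * lbar E x j))" for j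
    using abs_lbar_le
    by (intro integrable_mult_right integrable_const_bound[where B = 1]) (simp_all add: indicator_def)
  have "(\<integral>x. indicator B (lbar E x i) * dl E C x i \<partial>positions N)
      = (\<integral>x. (\<Sum>j<M. S_mat C $$ (i, j) * (indicator B (lbar E x i) * lbar E x j)) \<partial>positions N)"
    unfolding dl_def len by (simp add: sum_distrib_left mult_ac)
  also have "\<dots> = (\<Sum>j<M. S_mat C $$ (i, j) * (\<integral>x. indicator B (lbar E x i) * lbar E x j \<partial>positions N))"
    using int by simp
  also have "\<dots> = S_mat C $$ (i, i) * partial_mean_signed_len B"
    using i by (simp add: integral_positions_indicator_lbar[OF E i] if_distrib cong: if_cong)
  finally show ?thesis .
qed

section \<open>Conditional expectation given the initial length\<close>

lemma (in prob_space) AE_cond_exp_given_eq_scaled: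
  fixes X Y :: "'a \<Rightarrow> real"
  assumes X: "integrable M X" and Y: "integrable M Y"
    and moments: "\<And>B. B \<in> sets borel \<Longrightarrow>
      (\<integral>\<omega>. indicator B (Y \<omega>) * X \<omega> \<partial>M) = c * (\<integral>\<omega>. indicator B (Y \<omega>) * Y \<omega> \<partial>M)"
  shows "AE \<omega> in M. cond_exp_given M X Y \<omega> = c * Y \<omega>"
proof -
  let ?F = "vimage_algebra (space M) Y borel"
  have Y_meas: "Y \<in> borel_measurable M" using Y by auto
  have sets_F: "sets ?F = {Y -` B \<inter> space M | B. B \<in> sets borel}"
    by (rule sets_vimage_algebra2) simp
  interpret finite_measure_subalgebra M ?F
    by unfold_locales (use measurable_sets[OF Y_meas] in \<open>auto simp: subalgebra_def sets_F\<close>)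
  have "AE \<omega> in M. real_cond_exp M ?F X \<omega> = c * Y \<omega>"
  proof (rule real_cond_exp_charact)
    fix A assume "A \<in> sets ?F"
    then obtain B where B: "B \<in> sets borel" and A: "A = Y -` B \<inter> space M"
      unfolding sets_F by auto
    have "(\<integral>\<omega>\<in>A. X \<omega> \<partial>M) = (\<integral>\<omega>. indicator B (Y \<omega>) * X \<omega> \<partial>M)"
      unfolding set_lebesgue_integral_def A
      by (intro Bochner_Integration.integral_cong) (auto simp: indicator_def)
    also have "\<dots> = (\<integral>\<omega>. indicator B (Y \<omega>) * (c * Y \<omega>) \<partial>M)"
      using moments[OF B] by (simp add: mult.left_commute)
    also have "\<dots> = (\<integral>\<omega>\<in>A. c * Y \<omega> \<partial>M)"
      unfolding set_lebesgue_integral_def A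
      by (intro Bochner_Integration.integral_cong) (auto simp: indicator_def)
    finally show "(\<integral>\<omega>\<in>A. X \<omega> \<partial>M) = (\<integral>\<omega>\<in>A. c * Y \<omega> \<partial>M)" .
  next
    show "(\<lambda>\<omega>. c * Y \<omega>) \<in> borel_measurable ?F"
      by (intro borel_measurable_times borel_measurable_const measurable_vimage_algebra1) simp
  qed (use X Y in simp_all)
  thus ?thesis unfolding cond_exp_given_def .
qed

lemma AE_cond_exp_given_DL_eq_scaled:
  fixes Cof :: "(nat \<times> nat) list \<Rightarrow> int mat" and \<kappa> :: real
  assumes M: "0 < M" and Q: "set_pmf Q \<subseteq> {E. valid_graph N M E}"
    and trace: "\<And>E. E \<in> set_pmf Q \<Longrightarrow> (\<Sum>i<M. S_mat (Cof E) $$ (i, i)) = \<kappa> * real M"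
  shows "AE \<omega> in ens N M Q. cond_exp_given (ens N M Q) (DL Cof) Lbar \<omega> = \<kappa> * Lbar \<omega>"
proof -
  have finite_Q: "finite (set_pmf Q)" by (rule finite_subset[OF Q finite_valid_graphs])
  have valid: "valid_graph N M E" if "E \<in> set_pmf Q" for E using Q that by auto
  define K where "K = (\<Sum>E\<in>set_pmf Q. \<Sum>i<M. \<Sum>j<M. \<bar>S_mat (Cof E) $$ (i, j)\<bar>)"
  have dl_bounded: "\<bar>dl E (Cof E) x i\<bar> \<le> K" if E: "E \<in> set_pmf Q" and i: "i < M" for E x i
  proof -
    have "\<bar>dl E (Cof E) x i\<bar> \<le> (\<Sum>j<M. \<bar>S_mat (Cof E) $$ (i, j)\<bar>)"
      using valid[OF E] by (intro abs_dl_le) (simp add: valid_graph_def)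
    also have "\<dots> \<le> (\<Sum>i<M. \<Sum>j<M. \<bar>S_mat (Cof E) $$ (i, j)\<bar>)"
      using i by (intro member_le_sum sum_nonneg) auto
    also have "\<dots> \<le> K"
      unfolding K_def using E finite_Q by (intro member_le_sum sum_nonneg) auto
    finally show ?thesis .
  qed
  have K_nonneg: "0 \<le> K" unfolding K_def by (intro sum_nonneg) auto
  have measurable_indicator_lbar_times:
    "(\<lambda>x. indicator B (lbar E x i) * f x) \<in> borel_measurable (positions N)"
    if "B \<in> sets borel" "f \<in> borel_measurable (positions N)" for B E i and f :: "_ \<Rightarrow> real"
    using that by (intro borel_measurable_times measurable_compose[OF borel_measurable_lbar]) auto
  interpret prob_space "ens N M Q"
    unfolding ens_def by (intro prob_space_pair measure_pmf.prob_space_axioms prob_space_positions)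
  let ?G = "partial_mean_signed_len"
  show ?thesis
  proof (rule AE_cond_exp_given_eq_scaled)
    show "integrable (ens N M Q) (DL Cof)"
      unfolding DL_def
      by (rule integrable_ens[OF M finite_Q, where g = "\<lambda>E i x. dl E (Cof E) x i" and K = K])
         (simp_all add: dl_bounded)
    show "integrable (ens N M Q) Lbar"
      unfolding Lbar_def
      by (rule integrable_ens[OF M finite_Q, where g = "\<lambda>E i x. lbar E x i" and K = 1])
         (simp_all add: abs_lbar_le)
  next
    fix B :: "real set" assume B [measurable]: "B \<in> sets borel"
    have "(\<integral>\<omega>. indicator B (Lbar \<omega>) * DL Cof \<omega> \<partial>ens N M Q)
        = (\<Sum>E\<in>set_pmf Q. pmf Q E
            * (\<Sum>i<M. \<integral>x. indicator B (lbar E x i) * dl E (Cof E) x i \<partial>positions N) / real M)"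
      unfolding Lbar_def DL_def
      by (rule integral_ens[OF M finite_Q, where g = "\<lambda>E i x. indicator B (lbar E x i) * dl E (Cof E) x i"])
         (use dl_bounded K_nonneg in \<open>auto simp: abs_mult indicator_def intro!: measurable_indicator_lbar_times\<close>)
    also have "\<dots> = (\<Sum>E\<in>set_pmf Q. pmf Q E * (\<Sum>i<M. S_mat (Cof E) $$ (i, i) * ?G B) / real M)"
      by (intro sum.cong refl arg_cong2[where f = "\<lambda>a b. a * b / real M"])
         (simp add: integral_positions_indicator_lbar_dl[OF valid _ B])
    also have "\<dots> = \<kappa> * (\<Sum>E\<in>set_pmf Q. pmf Q E * (\<Sum>i<M. ?G B) / real M)"
      unfolding sum_distrib_left[of \<kappa>]
    proof (intro sum.cong refl)
      fix E assume "E \<in> set_pmf Q"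
      hence "(\<Sum>i<M. S_mat (Cof E) $$ (i, i) * ?G B) = \<kappa> * (\<Sum>i<M. ?G B)"
        by (simp add: sum_distrib_right[symmetric] trace)
      thus "pmf Q E * (\<Sum>i<M. S_mat (Cof E) $$ (i, i) * ?G B) / real M
          = \<kappa> * (pmf Q E * (\<Sum>i<M. ?G B) / real M)"
        by simp
    qed
    also have "(\<Sum>E\<in>set_pmf Q. pmf Q E * (\<Sum>i<M. ?G B) / real M)
        = (\<Sum>E\<in>set_pmf Q. pmf Q E
            * (\<Sum>i<M. \<integral>x. indicator B (lbar E x i) * lbar E x i \<partial>positions N) / real M)"
      by (intro sum.cong refl arg_cong2[where f = "\<lambda>a b. a * b / real M"])
         (simp add: integral_positions_indicator_lbar[OF valid _ _ B])
    also have "\<dots> = (\<integral>\<omega>. indicator B (Lbar \<omega>) * Lbar \<omega> \<partial>ens N M Q)"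
      unfolding Lbar_def
      by (rule integral_ens[OF M finite_Q, where g = "\<lambda>E i x. indicator B (lbar E x i) * lbar E x i", symmetric])
         (use abs_lbar_le in \<open>auto simp: abs_mult indicator_def intro!: measurable_indicator_lbar_times\<close>)
    finally show "(\<integral>\<omega>. indicator B (Lbar \<omega>) * DL Cof \<omega> \<partial>ens N M Q)
        = \<kappa> * (\<integral>\<omega>. indicator B (Lbar \<omega>) * Lbar \<omega> \<partial>ens N M Q)" .
  qed
qed

theorem mainTheorem3:
  fixes N M :: nat and z :: real
    and Q :: "(nat \<times> nat) list pmf" and Cof :: "(nat \<times> nat) list \<Rightarrow> int mat"
    and E0 :: "(nat \<times> nat) list" and C0 :: "int mat"
  assumes "N \<ge> 3" and "2 \<le> z" and "z \<le> real N - 1" and "real M = real N * z / 2"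
    and "set_pmf Q \<subseteq> {E. valid_graph N M E}"
    and "\<And>E. valid_graph N M E \<Longrightarrow> signed_cycle_matrix N E (Cof E)"
    and "valid_graph N M E0" and "signed_cycle_matrix N E0 C0"
  shows "(AE \<omega> in ens N M Q.
            cond_exp_given (ens N M Q) (DL Cof) Lbar \<omega>
              = - (2 * Lbar \<omega> / z) * (1 - 1 / real N))
       \<and> (AE \<omega> in ens N M (return_pmf E0).
            cond_exp_given (ens N M (return_pmf E0)) (DL (\<lambda>_. C0)) Lbar \<omega>
              = 2 * Lbar \<omega> / (real N * z) * mat_trace (S_mat C0))"
proof -
  have "real N * 2 \<le> real N * z" using assms(2) by (intro mult_left_mono) auto
  hence N_le_M: "N \<le> M" using assms(4) by simp
  hence M: "0 < M" using assms(1) by simp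
  have "AE \<omega> in ens N M Q. cond_exp_given (ens N M Q) (DL Cof) Lbar \<omega> = (1 - real N) / real M * Lbar \<omega>"
  proof (rule AE_cond_exp_given_DL_eq_scaled[OF M assms(5)])
    fix E assume "E \<in> set_pmf Q"
    hence len: "length E = M" and C: "signed_cycle_matrix N E (Cof E)"
      using assms(5,6) by (auto simp: valid_graph_def)
    have "(\<Sum>i<M. S_mat (Cof E) $$ (i, i)) = real (M - N + 1) - real M"
      using mat_trace_S_mat[OF C] mat_trace_S_mat_eq_sum[OF C] len by simp
    also have "\<dots> = 1 - real N" using N_le_M by (simp add: of_nat_diff)
    finally show "(\<Sum>i<M. S_mat (Cof E) $$ (i, i)) = (1 - real N) / real M * real M"
      using M by simp
  qed
  moreover have "AE \<omega> in ens N M (return_pmf E0).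
      cond_exp_given (ens N M (return_pmf E0)) (DL (\<lambda>_. C0)) Lbar \<omega> = mat_trace (S_mat C0) / real M * Lbar \<omega>"
    by (rule AE_cond_exp_given_DL_eq_scaled[OF M])
       (use assms(7,8) M in \<open>auto simp: mat_trace_S_mat_eq_sum valid_graph_def\<close>)
  moreover have "(1 - real N) / real M * L = - (2 * L / z) * (1 - 1 / real N)"
    and "mat_trace (S_mat C0) / real M * L = 2 * L / (real N * z) * mat_trace (S_mat C0)" for L
    using assms(1,2) unfolding assms(4) by (simp_all add: field_simps)
  ultimately show ?thesis by simp
qed

end
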